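(* Let $G$ be a finite group, $m$ a positive integer and $n$ a positive odd integer. Then $P_e(G)\cong P_e\big((\prod_{i=1}^{m}\mathbb{Z}_2)\times\mathbb{Z}_n\big)$ if and only if $G\cong (\prod_{i=1}^{m}\mathbb{Z}_2)\times\mathbb{Z}_n$.
   Context: All groups are finite. $\mathbb{Z}_k$ denotes the cyclic group of order $k$, and $\prod_{i=1}^m\mathbb{Z}_2$ the direct product of $m$ copies of $\mathbb{Z}_2$. For a group $X$, the enhanced power graph $P_e(X)$ is the simple graph with vertex set $X$ in which two distinct vertices $x,y$ are adjacent if and only if $\langle x,y\rangle$ is cyclic. *)

theory Defs
  imports "HOL-Algebra.Algebra"
begin

definition ep_adj :: "('a, 'b) monoid_scheme \<Rightarrow> 'a \<Rightarrow> 'a \<Rightarrow> bool" where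
  "ep_adj G x y \<longleftrightarrow> x \<noteq> y \<and> cyclic_group (subgroup_generated G {x, y})"

definition ep_graph_iso :: "('a, 'b) monoid_scheme \<Rightarrow> ('c, 'd) monoid_scheme \<Rightarrow> bool" where
  "ep_graph_iso G H \<longleftrightarrow> (\<exists>f. bij_betw f (carrier G) (carrier H) \<and>
     (\<forall>x\<in>carrier G. \<forall>y\<in>carrier G. ep_adj G x y \<longleftrightarrow> ep_adj H (f x) (f y)))"

definition Z2m_Zn :: "nat \<Rightarrow> nat \<Rightarrow> ((nat \<Rightarrow> int) \<times> int) monoid" where
  "Z2m_Zn m n = product_group {..<m} (\<lambda>_. integer_mod_group 2) \<times>\<times> integer_mod_group n"

end

(* An isomorphism of enhanced power graphs preserves the relation "x and y lie in a common cyclic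
   subgroup".  Write Z2m_Zn m n = B x Z_n with B = (Z_2)^m.  If B has at most two elements, B x Z_n
   is cyclic, its graph is complete, and so G is cyclic of the same order.  Otherwise the graph is
   a windmill: the n elements of {0} x Z_n are the dominating vertices, and every other closed
   neighbourhood is a clique of size 2n, two such cliques meeting exactly in the dominating set or
   coinciding.  Transported to G, each such neighbourhood is a cyclic subgroup of order 2n, so the
   dominating set D is a central cyclic subgroup of odd order n and of index 2 in all of them; hence
   D contains every square.  This forces G to be abelian, G = D x {x. x^2 = 1}, and the second
   factor is a Boolean group of order 2^m, hence isomorphic to B. *)

theory Submission
  imports Defs
begin

section \<open>Cyclic subgroups and enhanced power graph adjacency\<close>

definition powers :: "('a, 'b) monoid_scheme \<Rightarrow> 'a \<Rightarrow> 'a set" where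
  "powers G w = range (\<lambda>k::int. w [^]\<^bsub>G\<^esub> k)"

definition common_cyclic :: "('a, 'b) monoid_scheme \<Rightarrow> 'a \<Rightarrow> 'a \<Rightarrow> bool" where
  "common_cyclic G x y \<longleftrightarrow> (\<exists>w\<in>carrier G. x \<in> powers G w \<and> y \<in> powers G w)"

context group
begin

lemma nat_pow_two: "x \<in> carrier G \<Longrightarrow> x [^] (2::nat) = x \<otimes> x"
  by (simp add: numeral_2_eq_2)

lemma powers_subgroup: "w \<in> carrier G \<Longrightarrow> subgroup (powers G w) G"
  unfolding powers_def by (rule subgroup_of_powers)

lemma powers_self: "w \<in> carrier G \<Longrightarrow> w \<in> powers G w"
  unfolding powers_def by (metis int_pow_1 rangeI)

lemma powers_subset_carrier: "w \<in> carrier G \<Longrightarrow> powers G w \<subseteq> carrier G"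
  unfolding powers_def by auto

lemma powers_mono: "w \<in> carrier G \<Longrightarrow> g \<in> powers G w \<Longrightarrow> powers G g \<subseteq> powers G w"
  unfolding powers_def by (auto simp: int_pow_pow)

lemma cyclic_group_iff_powers: "cyclic_group G \<longleftrightarrow> (\<exists>g\<in>carrier G. carrier G = powers G g)"
  unfolding powers_def by (rule cyclic_group)

lemma cyclic_subgroup_generated_powers:
  assumes w: "w \<in> carrier G"
  shows "cyclic_group (subgroup_generated G (powers G w))"
proof -
  let ?S = "subgroup_generated G (powers G w)"
  have carr: "carrier ?S = powers G w"
    by (rule subgroup.carrier_subgroup_generated_subgroup[OF powers_subgroup[OF w]])
  then have wS: "w \<in> carrier ?S" using powers_self[OF w] by simp
  have "powers ?S w = powers G w"
    using int_pow_subgroup_generated[OF wS] by (simp add: powers_def)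
  then show ?thesis
    using group.cyclic_group_iff_powers[OF group_subgroup_generated] wS carr by metis
qed

lemma common_cyclic_refl: "x \<in> carrier G \<Longrightarrow> common_cyclic G x x"
  unfolding common_cyclic_def using powers_self by blast

lemma common_cyclic_sym: "common_cyclic G x y \<Longrightarrow> common_cyclic G y x"
  unfolding common_cyclic_def by blast

lemma common_cyclic_commute: "common_cyclic G x y \<Longrightarrow> x \<otimes> y = y \<otimes> x"
  unfolding common_cyclic_def powers_def
  by (auto simp flip: int_pow_mult simp: add.commute)

lemma subgroup_of_powers_is_powers:
  assumes T: "subgroup T G" and w: "w \<in> carrier G" and Tw: "T \<subseteq> powers G w"
  shows "\<exists>g\<in>T. T = powers G g"
proof (cases "T = {\<one>}")
  case True
  then show ?thesis by (auto simp: powers_def)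
next
  case False
  then obtain t where "t \<in> T" "t \<noteq> \<one>" using subgroup.one_closed[OF T] by auto
  then obtain k :: int where "w [^] k \<in> T" "k \<noteq> 0" using Tw by (force simp: powers_def)
  then have "w [^] nat \<bar>k\<bar> \<in> T"
    using w subgroup.m_inv_closed[OF T] by (cases "k \<ge> 0") (auto simp: int_pow_neg simp flip: int_pow_int)
  then have ex: "\<exists>d::nat. 0 < d \<and> w [^] d \<in> T" using \<open>k \<noteq> 0\<close> by (intro exI[of _ "nat \<bar>k\<bar>"]) auto
  define d where "d = (LEAST d::nat. 0 < d \<and> w [^] d \<in> T)"
  have d: "0 < d" "w [^] d \<in> T" using LeastI_ex[OF ex] by (auto simp: d_def)
  have d_min: "e \<ge> d" if "0 < e" "w [^] e \<in> T" for e :: nat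
    using that unfolding d_def by (intro Least_le) simp
  have "T \<subseteq> powers G (w [^] d)"
  proof
    fix s assume s: "s \<in> T"
    then obtain j :: int where j: "s = w [^] j" using Tw by (auto simp: powers_def)
    define q r where "q = j div int d" and "r = j mod int d"
    have r: "0 \<le> r" "r < int d" using d(1) by (auto simp: r_def)
    have wd: "(w [^] d) [^] q = w [^] (int d * q)" using w by (simp add: int_pow_pow flip: int_pow_int)
    have "j = int d * q + r" by (simp add: q_def r_def)
    then have s_eq: "s = (w [^] d) [^] q \<otimes> w [^] r"
      using w by (simp add: j wd int_pow_mult)
    have "w [^] r = inv ((w [^] d) [^] q) \<otimes> s"
      using w by (simp add: s_eq flip: m_assoc)
    also have "\<dots> \<in> T"
      using subgroup_int_pow_closed[OF T d(2)] s T by (simp add: subgroup.m_closed subgroup.m_inv_closed)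
    finally have "w [^] nat r \<in> T" using r by (simp flip: int_pow_int)
    then have "r = 0" using d_min[of "nat r"] r by (cases "r = 0") auto
    then show "s \<in> powers G (w [^] d)" using s_eq w by (simp add: powers_def)
  qed
  moreover have "powers G (w [^] d) \<subseteq> T"
    using subgroup_int_pow_closed[OF T d(2)] by (auto simp: powers_def)
  ultimately show ?thesis using d(2) by blast
qed

lemma cyclic_subgroup_generated_pair_iff:
  assumes x: "x \<in> carrier G" and y: "y \<in> carrier G"
  shows "cyclic_group (subgroup_generated G {x, y}) \<longleftrightarrow> common_cyclic G x y"
proof -
  let ?S = "subgroup_generated G {x, y}"
  have S_sub: "subgroup (carrier ?S) G" by (rule subgroup_subgroup_generated)
  have xyS: "x \<in> carrier ?S" "y \<in> carrier ?S"
    using x y by (auto simp: carrier_subgroup_generated intro: generate.incl)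
  have "powers ?S g = powers G g" if "g \<in> carrier ?S" for g
    using int_pow_subgroup_generated[OF that] by (simp add: powers_def)
  then have "cyclic_group ?S \<longleftrightarrow> (\<exists>g\<in>carrier ?S. carrier ?S = powers G g)"
    using group.cyclic_group_iff_powers[OF group_subgroup_generated] by auto
  also have "\<dots> \<longleftrightarrow> common_cyclic G x y"
  proof
    assume "\<exists>g\<in>carrier ?S. carrier ?S = powers G g"
    then show "common_cyclic G x y"
      unfolding common_cyclic_def using xyS subgroup.mem_carrier[OF S_sub] by auto
  next
    assume "common_cyclic G x y"
    then obtain w where w: "w \<in> carrier G" "x \<in> powers G w" "y \<in> powers G w"
      by (auto simp: common_cyclic_def)
    have "carrier ?S \<subseteq> powers G w"
      using w by (intro subgroup_generated_minimal powers_subgroup) auto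
    then show "\<exists>g\<in>carrier ?S. carrier ?S = powers G g"
      using subgroup_of_powers_is_powers[OF S_sub w(1)] by blast
  qed
  finally show ?thesis .
qed

lemma ep_adj_iff_common_cyclic:
  "x \<in> carrier G \<Longrightarrow> y \<in> carrier G \<Longrightarrow> ep_adj G x y \<longleftrightarrow> x \<noteq> y \<and> common_cyclic G x y"
  unfolding ep_adj_def using cyclic_subgroup_generated_pair_iff by auto

end

section \<open>Windmill graphs\<close>

definition closed_nbhd :: "'a set \<Rightarrow> ('a \<Rightarrow> 'a \<Rightarrow> bool) \<Rightarrow> 'a \<Rightarrow> 'a set" where
  "closed_nbhd V E x = {y \<in> V. E x y}"

definition dominating_set :: "'a set \<Rightarrow> ('a \<Rightarrow> 'a \<Rightarrow> bool) \<Rightarrow> 'a set" where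
  "dominating_set V E = {x \<in> V. closed_nbhd V E x = V}"

definition clique :: "('a \<Rightarrow> 'a \<Rightarrow> bool) \<Rightarrow> 'a set \<Rightarrow> bool" where
  "clique E K \<longleftrightarrow> (\<forall>a\<in>K. \<forall>b\<in>K. E a b)"

text \<open>The shape of the enhanced power graph of (Z_2)^m x Z_n for m \<ge> 2: cliques of size 2n
  ("blades", the closed neighbourhoods of the non-dominating vertices) glued along the n dominating
  vertices.\<close>
definition windmill :: "'a set \<Rightarrow> ('a \<Rightarrow> 'a \<Rightarrow> bool) \<Rightarrow> nat \<Rightarrow> bool" where
  "windmill V E n \<longleftrightarrow> card (dominating_set V E) = n \<and>
    (\<forall>x\<in>V - dominating_set V E. card (closed_nbhd V E x) = 2 * n \<and> clique E (closed_nbhd V E x) \<and>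
       (\<forall>y\<in>closed_nbhd V E x - dominating_set V E. closed_nbhd V E y = closed_nbhd V E x)) \<and>
    (\<exists>x\<in>V - dominating_set V E. \<exists>y\<in>V - dominating_set V E.
       closed_nbhd V E x \<inter> closed_nbhd V E y = dominating_set V E)"

lemma closed_nbhd_subset: "closed_nbhd V E x \<subseteq> V"
  by (auto simp: closed_nbhd_def)

lemma dominating_set_subset: "dominating_set V E \<subseteq> V"
  by (auto simp: dominating_set_def)

context
  fixes f V W E F
  assumes bij: "bij_betw f V W"
    and rel: "\<And>x y. x \<in> V \<Longrightarrow> y \<in> V \<Longrightarrow> E x y \<longleftrightarrow> F (f x) (f y)"
begin

lemma image_closed_nbhd: "x \<in> V \<Longrightarrow> f ` closed_nbhd V E x = closed_nbhd W F (f x)"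
  using bij rel by (auto simp: closed_nbhd_def bij_betw_def)

lemma image_dominating_set: "f ` dominating_set V E = dominating_set W F"
proof -
  have inj: "inj_on f V" and img: "f ` V = W" using bij by (auto simp: bij_betw_def)
  have "x \<in> dominating_set V E \<longleftrightarrow> f x \<in> dominating_set W F" if "x \<in> V" for x
  proof -
    have "closed_nbhd V E x = V \<longleftrightarrow> f ` closed_nbhd V E x = f ` V"
      by (rule inj_on_image_eq_iff[OF inj closed_nbhd_subset order_refl, symmetric])
    then show ?thesis using that image_closed_nbhd[OF that] img by (auto simp: dominating_set_def)
  qed
  then show ?thesis using dominating_set_subset[of V E] dominating_set_subset[of W F] img by auto
qed

lemma image_eq_iff: "A \<subseteq> V \<Longrightarrow> B \<subseteq> V \<Longrightarrow> f ` A = f ` B \<longleftrightarrow> A = B"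
  using bij inj_on_image_eq_iff[of f V A B] by (simp add: bij_betw_def)

lemma image_notin_dominating_set_iff: "x \<in> V \<Longrightarrow> f x \<in> W - dominating_set W F \<longleftrightarrow> x \<in> V - dominating_set V E"
  using bij inj_on_image_mem_iff[of f V x "dominating_set V E"] image_dominating_set dominating_set_subset[of V E]
  by (auto simp: bij_betw_def)

lemma windmill_blade_transfer:
  assumes windmill: "windmill W F n" and x: "x \<in> V - dominating_set V E"
  shows "card (closed_nbhd V E x) = 2 * n \<and> clique E (closed_nbhd V E x)
    \<and> (\<forall>y\<in>closed_nbhd V E x - dominating_set V E. closed_nbhd V E y = closed_nbhd V E x)"
proof (intro conjI ballI)
  let ?N = "closed_nbhd V E" and ?N' = "closed_nbhd W F"
  have xV: "x \<in> V" using x by blast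
  have N'x: "?N' (f x) = f ` ?N x" using image_closed_nbhd[OF xV] by simp
  have "f x \<in> W - dominating_set W F" using image_notin_dominating_set_iff[OF xV] x by blast
  then have card': "card (?N' (f x)) = 2 * n" and clique': "clique F (?N' (f x))"
    and same': "\<And>y'. y' \<in> ?N' (f x) - dominating_set W F \<Longrightarrow> ?N' y' = ?N' (f x)"
    using windmill unfolding windmill_def by blast+
  show "card (?N x) = 2 * n"
    using card' bij N'x closed_nbhd_subset[of V E x]
    by (metis bij_betw_def card_image inj_on_subset)
  show "clique E (?N x)"
    unfolding clique_def
  proof (intro ballI)
    fix a b assume ab: "a \<in> ?N x" "b \<in> ?N x"
    then have "F (f a) (f b)" using clique' by (auto simp: clique_def N'x)
    moreover have "a \<in> V" "b \<in> V" using ab closed_nbhd_subset[of V E x] by auto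
    ultimately show "E a b" using rel by simp
  qed
  fix y assume y: "y \<in> ?N x - dominating_set V E"
  have yV: "y \<in> V" using y closed_nbhd_subset[of V E x] by auto
  have "f y \<in> ?N' (f x)" using y N'x by simp
  moreover have "f y \<notin> dominating_set W F" using y yV image_notin_dominating_set_iff[OF yV] by simp
  ultimately have "?N' (f y) = ?N' (f x)" using same' by blast
  then have "f ` ?N y = f ` ?N x" using image_closed_nbhd[OF yV] N'x by simp
  then show "?N y = ?N x" using image_eq_iff[OF closed_nbhd_subset closed_nbhd_subset] by blast
qed

lemma windmill_transfer:
  assumes windmill: "windmill W F n"
  shows "windmill V E n"
proof -
  let ?N = "closed_nbhd V E" and ?D = "dominating_set V E"
  have "card ?D = card (f ` ?D)"
    using bij dominating_set_subset[of V E] by (metis bij_betw_def card_image inj_on_subset)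
  then have card_D: "card ?D = n" using windmill image_dominating_set unfolding windmill_def by simp
  obtain x' y' where x': "x' \<in> W - dominating_set W F" and y': "y' \<in> W - dominating_set W F"
    and meet': "closed_nbhd W F x' \<inter> closed_nbhd W F y' = dominating_set W F"
    using windmill unfolding windmill_def by blast
  obtain x y where x: "x \<in> V" "x' = f x" and y: "y \<in> V" "y' = f y"
    using x' y' bij by (auto simp: bij_betw_def)
  have "f ` (?N x \<inter> ?N y) = f ` ?D"
    using meet' image_closed_nbhd x y image_dominating_set bij
    by (simp add: inj_on_image_Int[OF _ closed_nbhd_subset closed_nbhd_subset] bij_betw_def)
  then have "?N x \<inter> ?N y = ?D"
    using image_eq_iff[of "?N x \<inter> ?N y" ?D] closed_nbhd_subset[of V E x] dominating_set_subset[of V E]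
    by blast
  moreover have "x \<in> V - ?D" "y \<in> V - ?D"
    using image_notin_dominating_set_iff[OF x(1)] image_notin_dominating_set_iff[OF y(1)] x y x' y' by blast+
  ultimately show ?thesis
    unfolding windmill_def using card_D windmill_blade_transfer[OF windmill] by blast
qed

end

lemma ep_graph_iso_common_cyclic:
  assumes G: "group G" and H: "group H" and iso: "ep_graph_iso G H"
  obtains f where "bij_betw f (carrier G) (carrier H)"
    and "\<And>x y. x \<in> carrier G \<Longrightarrow> y \<in> carrier G \<Longrightarrow> common_cyclic G x y \<longleftrightarrow> common_cyclic H (f x) (f y)"
proof -
  obtain f where bij: "bij_betw f (carrier G) (carrier H)"
    and adj: "\<And>x y. x \<in> carrier G \<Longrightarrow> y \<in> carrier G \<Longrightarrow> ep_adj G x y \<longleftrightarrow> ep_adj H (f x) (f y)"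
    using iso by (auto simp: ep_graph_iso_def)
  have "common_cyclic G x y \<longleftrightarrow> common_cyclic H (f x) (f y)"
    if x: "x \<in> carrier G" and y: "y \<in> carrier G" for x y
  proof -
    have fxy: "f x \<in> carrier H" "f y \<in> carrier H" using bij x y bij_betwE by blast+
    have "x = y \<longleftrightarrow> f x = f y" using bij x y by (auto simp: bij_betw_def inj_on_def)
    then show ?thesis
      using adj[OF x y] group.ep_adj_iff_common_cyclic[OF G x y] group.ep_adj_iff_common_cyclic[OF H fxy]
        group.common_cyclic_refl[OF G x] group.common_cyclic_refl[OF H fxy(1)]
      by blast
  qed
  with bij show ?thesis using that by blast
qed

lemma iso_imp_ep_graph_iso:
  assumes G: "group G" and H: "group H" and h: "h \<in> iso G H"
  shows "ep_graph_iso G H"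
  unfolding ep_graph_iso_def
proof (intro exI conjI ballI)
  show bij: "bij_betw h (carrier G) (carrier H)" using h by (simp add: iso_def)
  interpret group_hom G H h using G H h by (simp add: group_hom_def group_hom_axioms_def iso_def)
  fix x y assume x: "x \<in> carrier G" and y: "y \<in> carrier G"
  have "h \<in> iso (subgroup_generated G {x, y}) (subgroup_generated H {h x, h y})"
    by (rule iso_between_subgroups) (use h x y in auto)
  then have "cyclic_group (subgroup_generated G {x, y}) \<longleftrightarrow> cyclic_group (subgroup_generated H {h x, h y})"
    by (intro isomorphic_group_cyclicity is_isoI) (simp_all add: G H group.group_subgroup_generated)
  moreover have "x \<noteq> y \<longleftrightarrow> h x \<noteq> h y" using bij x y by (auto simp: bij_betw_def inj_on_def)
  ultimately show "ep_adj G x y \<longleftrightarrow> ep_adj H (h x) (h y)" unfolding ep_adj_def by simp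
qed

section \<open>Cyclic groups, squares and subgroups of odd order\<close>

context group
begin

lemma ex_non_one:
  assumes "1 < card (carrier G)"
  shows "\<exists>t\<in>carrier G. t \<noteq> \<one>"
proof (rule ccontr)
  assume "\<not> ?thesis"
  then have "card (carrier G) \<le> card {\<one>}" by (intro card_mono) auto
  then show False using assms by simp
qed

lemma card_le_two_imp_cyclic:
  assumes fin: "finite (carrier G)" and two: "card (carrier G) \<le> 2"
  shows "cyclic_group G"
proof -
  obtain t where t: "t \<in> carrier G" "carrier G \<subseteq> {\<one>, t}"
  proof (cases "carrier G \<subseteq> {\<one>}")
    case False
    then obtain t where t: "t \<in> carrier G" "t \<noteq> \<one>" by blast
    then have "{\<one>, t} = carrier G" using fin two by (intro card_seteq) auto
    with t that show ?thesis by blast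
  qed blast
  moreover have "{\<one>, t} \<subseteq> powers G t"
    using t(1) powers_self subgroup.one_closed[OF powers_subgroup] by blast
  ultimately show ?thesis using powers_subset_carrier cyclic_group_iff_powers by blast
qed

lemma pow_card_subgroup_eq_one:
  assumes D: "subgroup D G" and fin: "finite D" and d: "d \<in> D"
  shows "d [^] card D = \<one>"
proof -
  have carr: "carrier (subgroup_generated G D) = D"
    by (rule subgroup.carrier_subgroup_generated_subgroup[OF D])
  have "d [^]\<^bsub>subgroup_generated G D\<^esub> order (subgroup_generated G D) = \<one>\<^bsub>subgroup_generated G D\<^esub>"
    by (rule group.pow_order_eq_1) (simp_all add: carr d)
  then show ?thesis by (simp add: pow_subgroup_generated order_def carr)
qed

lemma odd_card_subgroup_square_eq_one:
  assumes D: "subgroup D G" "finite D" "odd (card D)" and d: "d \<in> D" "d \<otimes> d = \<one>"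
  shows "d = \<one>"
proof -
  obtain k where k: "card D = Suc (2 * k)" using D(3) oddE by fastforce
  have dG: "d \<in> carrier G" using d subgroup.mem_carrier[OF D(1)] by blast
  have "d [^] (2::nat) = \<one>" using dG d(2) by (simp add: nat_pow_two)
  then have "d [^] card D = d" using dG by (simp add: k nat_pow_pow[symmetric])
  then show ?thesis using pow_card_subgroup_eq_one[OF D(1,2) d(1)] by simp
qed

lemma translate_subgroup_disjoint:
  assumes D: "subgroup D G" and x: "x \<in> carrier G" "x \<notin> D"
  shows "D \<inter> (\<lambda>d. x \<otimes> d) ` D = {}" and "card ((\<lambda>d. x \<otimes> d) ` D) = card D"
proof -
  have DG: "D \<subseteq> carrier G" using D subgroup.subset by blast
  show "D \<inter> (\<lambda>d. x \<otimes> d) ` D = {}"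
  proof (rule ccontr)
    assume "D \<inter> (\<lambda>d. x \<otimes> d) ` D \<noteq> {}"
    then obtain d where d: "d \<in> D" "x \<otimes> d \<in> D" by auto
    then have "(x \<otimes> d) \<otimes> inv d \<in> D" using D by (simp add: subgroup.m_closed subgroup.m_inv_closed)
    moreover have "(x \<otimes> d) \<otimes> inv d = x" using x(1) d(1) DG by (simp add: m_assoc subsetD)
    ultimately show False using x(2) by simp
  qed
  have "inj_on (\<lambda>d. x \<otimes> d) D"
    by (rule inj_onI) (metis DG l_cancel subsetD x(1))
  then show "card ((\<lambda>d. x \<otimes> d) ` D) = card D" by (rule card_image)
qed

lemma square_mem_index_two_subgroup:
  assumes K: "subgroup K G" "finite K" and D: "subgroup D G" "D \<subseteq> K"
    and card_K: "card K = 2 * card D" and x: "x \<in> K"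
  shows "x \<otimes> x \<in> D"
proof (cases "x \<in> D")
  case True
  then show ?thesis using D(1) by (simp add: subgroup.m_closed)
next
  case False
  have xG: "x \<in> carrier G" using x K(1) subgroup.subset by blast
  let ?xD = "(\<lambda>d. x \<otimes> d) ` D"
  have sub: "D \<union> ?xD \<subseteq> K" using D x K(1) by (auto simp: subgroup.m_closed)
  have finD: "finite D" using K(2) D(2) by (rule finite_subset[rotated])
  have "card (D \<union> ?xD) = card K"
    using translate_subgroup_disjoint[OF D(1) xG False] card_K finD
    by (simp add: card_Un_disjoint)
  then have K_eq: "K = D \<union> ?xD" using card_seteq[OF K(2) sub] by simp
  have "x \<otimes> x \<notin> ?xD"
  proof
    assume "x \<otimes> x \<in> ?xD"
    then obtain d where "d \<in> D" "x \<otimes> x = x \<otimes> d" by blast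
    moreover have "d \<in> carrier G" using \<open>d \<in> D\<close> subgroup.mem_carrier[OF D(1)] by blast
    ultimately show False using False xG by simp
  qed
  moreover have "x \<otimes> x \<in> K" using K(1) x by (simp add: subgroup.m_closed)
  ultimately show ?thesis using K_eq by blast
qed

text \<open>z = (xy)^2 (x^2 y^2)^-1 lies in D and satisfies xy = z yx, i.e. it is the commutator of
  x and y; then z^2 is the commutator of x^2 and y, which is trivial because x^2 is central.\<close>
lemma comm_group_if_squares_in_central_subgroup:
  assumes D: "subgroup D G"
    and central: "\<And>d y. d \<in> D \<Longrightarrow> y \<in> carrier G \<Longrightarrow> d \<otimes> y = y \<otimes> d"
    and squares: "\<And>x. x \<in> carrier G \<Longrightarrow> x \<otimes> x \<in> D"
    and no_involution: "\<And>d. d \<in> D \<Longrightarrow> d \<otimes> d = \<one> \<Longrightarrow> d = \<one>"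
  shows "comm_group G"
proof (rule group_comm_groupI)
  fix x y assume x: "x \<in> carrier G" and y: "y \<in> carrier G"
  have DG: "D \<subseteq> carrier G" using D subgroup.subset by blast
  have xx: "(x \<otimes> x) \<otimes> a = a \<otimes> (x \<otimes> x)" if "a \<in> carrier G" for a
    using central[OF squares[OF x] that] .
  define z where "z = (x \<otimes> y) \<otimes> (x \<otimes> y) \<otimes> inv ((x \<otimes> x) \<otimes> (y \<otimes> y))"
  have zD: "z \<in> D"
    using squares x y D by (simp add: z_def subgroup.m_closed subgroup.m_inv_closed)
  then have zG: "z \<in> carrier G" using DG by blast
  have "y \<otimes> (x \<otimes> (x \<otimes> y)) = y \<otimes> ((x \<otimes> x) \<otimes> y)" using x y by (simp add: m_assoc)
  also have "\<dots> = (y \<otimes> y) \<otimes> (x \<otimes> x)" using x y by (simp only: xx[OF y] m_assoc m_closed)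
  also have "\<dots> = (x \<otimes> x) \<otimes> (y \<otimes> y)" using xx[OF m_closed[OF y y]] by simp
  finally have "z \<otimes> (y \<otimes> x) \<otimes> (x \<otimes> y) = (x \<otimes> y) \<otimes> (x \<otimes> y)"
    using x y by (simp add: z_def m_assoc)
  then have xy: "x \<otimes> y = z \<otimes> (y \<otimes> x)"
    using x y zG r_cancel[of "x \<otimes> y" "z \<otimes> (y \<otimes> x)" "x \<otimes> y"] by simp
  have "(z \<otimes> z) \<otimes> (y \<otimes> (x \<otimes> x)) = x \<otimes> (x \<otimes> y)"
  proof -
    have "x \<otimes> (x \<otimes> y) = (x \<otimes> z) \<otimes> (y \<otimes> x)" using x y zG by (simp add: xy m_assoc)
    also have "\<dots> = (z \<otimes> x) \<otimes> (y \<otimes> x)" by (simp only: central[OF zD x])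
    also have "\<dots> = z \<otimes> ((x \<otimes> y) \<otimes> x)" using x y zG by (simp add: m_assoc)
    also have "\<dots> = (z \<otimes> z) \<otimes> (y \<otimes> (x \<otimes> x))" using x y zG by (simp add: xy m_assoc)
    finally show ?thesis by simp
  qed
  also have "\<dots> = \<one> \<otimes> (y \<otimes> (x \<otimes> x))" using xx[OF y] x y by (simp add: m_assoc)
  finally have "z \<otimes> z = \<one>" using x y zG by (simp del: l_one)
  then show "x \<otimes> y = y \<otimes> x" using no_involution[OF zD] xy x y by simp
qed

text \<open>Since D has odd order n and contains x^2, the factors x^(n+1) and x^n of x
  lie in D and square to 1, respectively.\<close>
lemma mem_odd_subgroup_mult_square_one:
  assumes D: "subgroup D G" "finite D" "odd (card D)" and x: "x \<in> carrier G" "x \<otimes> x \<in> D"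
  shows "x \<in> D <#> {y \<in> carrier G. y \<otimes> y = \<one>}"
proof -
  let ?n = "card D"
  obtain k where k: "?n + 1 = 2 * Suc k" using D(3) oddE by fastforce
  have "(x \<otimes> x) [^] j = x [^] (2 * j)" for j :: nat
    using nat_pow_pow[OF x(1), of 2 j] by (simp add: nat_pow_two x(1))
  then have "x [^] (?n + 1) = (x \<otimes> x) [^] Suc k" by (simp only: k)
  moreover have "(x \<otimes> x) [^] Suc k \<in> D"
    by (metis int_pow_int subgroup_int_pow_closed[OF D(1) x(2)])
  ultimately have in_D: "x [^] (?n + 1) \<in> D" by simp
  have "x [^] ?n \<otimes> x [^] ?n = (x \<otimes> x) [^] ?n"
    by (rule pow_mult_distrib[OF refl x(1) x(1), symmetric])
  also have "\<dots> = \<one>" using pow_card_subgroup_eq_one[OF D(1,2) x(2)] .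
  finally have sq: "x [^] ?n \<otimes> x [^] ?n = \<one>" .
  have "x [^] (?n + 1) \<otimes> x [^] ?n = (x \<otimes> x [^] ?n) \<otimes> x [^] ?n"
    using nat_pow_Suc2[OF x(1), of ?n] by simp
  also have "\<dots> = x \<otimes> (x [^] ?n \<otimes> x [^] ?n)" using x(1) by (simp add: m_assoc)
  also have "\<dots> = x" using x(1) sq by simp
  finally show ?thesis using in_D sq nat_pow_closed[OF x(1)] unfolding set_mult_def by force
qed

end

lemma (in comm_group) subgroup_square_eq_one: "subgroup {x \<in> carrier G. x \<otimes> x = \<one>} G"
proof (rule subgroupI)
  fix a b assume "a \<in> {x \<in> carrier G. x \<otimes> x = \<one>}" "b \<in> {x \<in> carrier G. x \<otimes> x = \<one>}"
  then show "a \<otimes> b \<in> {x \<in> carrier G. x \<otimes> x = \<one>}" by (simp add: m_ac)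
qed (auto simp flip: inv_mult_group)

lemma (in comm_group) odd_subgroup_complement_iso:
  assumes D: "subgroup D G" "finite D" "odd (card D)"
    and squares: "\<And>x. x \<in> carrier G \<Longrightarrow> x \<otimes> x \<in> D"
  shows "(\<lambda>(x, y). x \<otimes> y) \<in> iso (subgroup_generated G D \<times>\<times> subgroup_generated G {x \<in> carrier G. x \<otimes> x = \<one>}) G"
proof -
  let ?P = "{x \<in> carrier G. x \<otimes> x = \<one>}"
  have factor: "x \<in> D <#> ?P" if "x \<in> carrier G" for x
    using mem_odd_subgroup_mult_square_one[OF D that squares[OF that]] .
  have "D \<inter> ?P \<subseteq> {\<one>}" using odd_card_subgroup_square_eq_one[OF D] by blast
  moreover have "D <#> ?P = carrier G"
    using factor subgroup.mem_carrier[OF D(1)] unfolding set_mult_def by blast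
  moreover have "group_disjoint_sum G D ?P"
    using D(1) subgroup_square_eq_one by (simp add: group_disjoint_sum_def is_group)
  ultimately show ?thesis using group_disjoint_sum.iso_group_mul comm_group_axioms by blast
qed

lemma cyclic_group_iso_integer_mod_group:
  assumes C: "group C" "cyclic_group C" "finite (carrier C)"
  shows "integer_mod_group (card (carrier C)) \<cong> C"
proof -
  interpret C: group C by (rule C(1))
  obtain g where g: "g \<in> carrier C" and gen: "carrier C = powers C g"
    using C(2) C.cyclic_group_iff_powers by blast
  let ?n = "card (carrier C)"
  have n0: "?n \<noteq> 0" using C(3) g by auto
  have "g [^]\<^bsub>C\<^esub> int ?n = \<one>\<^bsub>C\<^esub>"
    using C.pow_order_eq_1[OF g] by (simp add: order_def int_pow_int)
  then have pow_mod: "g [^]\<^bsub>C\<^esub> (k mod int ?n) = g [^]\<^bsub>C\<^esub> k" for k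
    using g C.int_pow_mult[OF g, of "int ?n * (k div int ?n)" "k mod int ?n"]
    by (simp add: C.int_pow_pow[OF g, symmetric])
  define \<phi> where "\<phi> k = g [^]\<^bsub>C\<^esub> (k::int)" for k
  have hom: "\<phi> \<in> hom (integer_mod_group ?n) C"
    by (rule homI) (use g in \<open>auto simp: \<phi>_def pow_mod C.int_pow_mult\<close>)
  have img: "\<phi> ` {0..<int ?n} = carrier C"
  proof
    show "\<phi> ` {0..<int ?n} \<subseteq> carrier C" using g by (auto simp: \<phi>_def)
    show "carrier C \<subseteq> \<phi> ` {0..<int ?n}"
    proof
      fix x assume "x \<in> carrier C"
      then obtain k :: int where "x = \<phi> k" using gen by (auto simp: powers_def \<phi>_def)
      then have "x = \<phi> (k mod int ?n)" by (simp add: \<phi>_def pow_mod)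
      then show "x \<in> \<phi> ` {0..<int ?n}" using n0 by force
    qed
  qed
  then have "inj_on \<phi> {0..<int ?n}" by (intro eq_card_imp_inj_on) auto
  then have "\<phi> \<in> iso (integer_mod_group ?n) C"
    using hom img n0 by (simp add: iso_def bij_betw_def carrier_integer_mod_group)
  then show ?thesis by (rule is_isoI)
qed

lemma cyclic_groups_iso:
  assumes "group G" "cyclic_group G" "finite (carrier G)"
    and "group H" "cyclic_group H" "finite (carrier H)"
    and "card (carrier G) = card (carrier H)"
  shows "G \<cong> H"
  using cyclic_group_iso_integer_mod_group[of G] cyclic_group_iso_integer_mod_group[of H] assms
  by (metis group.iso_sym group_integer_mod_group iso_trans)

section \<open>Boolean groups\<close>

definition boolean_group :: "('a, 'b) monoid_scheme \<Rightarrow> bool" where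
  "boolean_group G \<longleftrightarrow> group G \<and> (\<forall>x\<in>carrier G. x \<otimes>\<^bsub>G\<^esub> x = \<one>\<^bsub>G\<^esub>)"

context
  fixes G :: "('a, 'b) monoid_scheme" (structure)
  assumes boolean: "boolean_group G"
begin

interpretation group G using boolean by (simp add: boolean_group_def)

lemma boolean_square: "x \<in> carrier G \<Longrightarrow> x \<otimes> x = \<one>"
  using boolean by (simp add: boolean_group_def)

lemma boolean_inv: "x \<in> carrier G \<Longrightarrow> inv x = x"
  using boolean_square by (intro inv_equality) auto

lemma boolean_group_comm: "comm_group G"
proof (rule group_comm_groupI)
  fix x y assume "x \<in> carrier G" "y \<in> carrier G"
  then show "x \<otimes> y = y \<otimes> x"
    using boolean_inv[of "x \<otimes> y"] boolean_inv[of x] boolean_inv[of y] by (simp add: inv_mult_group)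
qed

interpretation comm_group G by (rule boolean_group_comm)

lemma boolean_group_subgroup_generated:
  "subgroup K G \<Longrightarrow> boolean_group (subgroup_generated G K)"
  using boolean_square subgroup.carrier_subgroup_generated_subgroup[of K G]
  by (auto simp: boolean_group_def group_subgroup_generated dest: subgroup.mem_carrier)

lemma boolean_subgroup_pair: "t \<in> carrier G \<Longrightarrow> subgroup {\<one>, t} G"
  using boolean_square boolean_inv by (intro subgroupI) auto

lemma boolean_subgroup_extend:
  assumes K: "subgroup K G" and s: "s \<in> carrier G"
  shows "subgroup {a \<in> carrier G. a \<in> K \<or> s \<otimes> a \<in> K} G"
proof (rule subgroupI)
  show "{a \<in> carrier G. a \<in> K \<or> s \<otimes> a \<in> K} \<noteq> {}"
    using subgroup.one_closed[OF K] by blast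
  fix a b
  assume a: "a \<in> {a \<in> carrier G. a \<in> K \<or> s \<otimes> a \<in> K}" and b: "b \<in> {a \<in> carrier G. a \<in> K \<or> s \<otimes> a \<in> K}"
  then show "inv a \<in> {a \<in> carrier G. a \<in> K \<or> s \<otimes> a \<in> K}" using boolean_inv by simp
  have aG: "a \<in> carrier G" and bG: "b \<in> carrier G" using a b by auto
  have e1: "s \<otimes> (a \<otimes> b) = (s \<otimes> a) \<otimes> b" using aG bG s by (simp add: m_assoc)
  have e2: "s \<otimes> (a \<otimes> b) = a \<otimes> (s \<otimes> b)" using aG bG s by (simp add: m_lcomm)
  have "(s \<otimes> a) \<otimes> (s \<otimes> b) = (s \<otimes> s) \<otimes> (a \<otimes> b)" using aG bG s by (simp add: m_ac)
  then have e3: "a \<otimes> b = (s \<otimes> a) \<otimes> (s \<otimes> b)" using aG bG boolean_square[OF s] by simp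
  from a b have "a \<in> K \<or> s \<otimes> a \<in> K" "b \<in> K \<or> s \<otimes> b \<in> K" by auto
  then have "a \<otimes> b \<in> K \<or> s \<otimes> (a \<otimes> b) \<in> K"
  proof (elim disjE)
    assume "a \<in> K" "b \<in> K"
    then show ?thesis using subgroup.m_closed[OF K] by blast
  next
    assume "a \<in> K" "s \<otimes> b \<in> K"
    then show ?thesis unfolding e2 using subgroup.m_closed[OF K] by blast
  next
    assume "s \<otimes> a \<in> K" "b \<in> K"
    then show ?thesis unfolding e1 using subgroup.m_closed[OF K] by blast
  next
    assume "s \<otimes> a \<in> K" "s \<otimes> b \<in> K"
    then show ?thesis unfolding e3 using subgroup.m_closed[OF K] by blast
  qed
  then show "a \<otimes> b \<in> {a \<in> carrier G. a \<in> K \<or> s \<otimes> a \<in> K}" using aG bG by simp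
qed auto

lemma boolean_subgroup_complement:
  assumes fin: "finite (carrier G)" and t: "t \<in> carrier G" "t \<noteq> \<one>"
  obtains K where "subgroup K G" "t \<notin> K" "carrier G = K \<union> (\<lambda>k. t \<otimes> k) ` K"
proof -
  let ?Ks = "{K. subgroup K G \<and> t \<notin> K}"
  have "?Ks \<subseteq> Pow (carrier G)" by (auto dest: subgroup.subset)
  then have "finite ?Ks" using fin by (simp add: finite_subset)
  moreover have "{\<one>} \<in> ?Ks" using t triv_subgroup by auto
  ultimately obtain K where K: "subgroup K G" "t \<notin> K"
    and maximal: "\<And>K'. subgroup K' G \<Longrightarrow> t \<notin> K' \<Longrightarrow> K \<subseteq> K' \<Longrightarrow> K' = K"
    using finite_has_maximal2[of ?Ks "{\<one>}"] by auto
  have KG: "K \<subseteq> carrier G" using K(1) subgroup.subset by blast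
  have "s \<in> K \<union> (\<lambda>k. t \<otimes> k) ` K" if s: "s \<in> carrier G" for s
  proof (rule ccontr)
    assume s_out: "s \<notin> K \<union> (\<lambda>k. t \<otimes> k) ` K"
    let ?K' = "{a \<in> carrier G. a \<in> K \<or> s \<otimes> a \<in> K}"
    have "s \<otimes> t \<notin> K"
    proof
      assume st: "s \<otimes> t \<in> K"
      have "s = t \<otimes> (s \<otimes> t)" using s t boolean_square[OF t(1)] by (simp add: m_ac)
      then show False using s_out st by blast
    qed
    then have "t \<notin> ?K'" using K(2) by blast
    moreover have "K \<subseteq> ?K'" using KG by blast
    ultimately have "?K' = K" using maximal boolean_subgroup_extend[OF K(1) s] by blast
    moreover have "s \<in> ?K'" using s boolean_square[OF s] subgroup.one_closed[OF K(1)] by simp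
    ultimately show False using s_out by blast
  qed
  then have "carrier G = K \<union> (\<lambda>k. t \<otimes> k) ` K" using KG t by auto
  with K that show ?thesis by blast
qed

lemma boolean_group_split:
  assumes fin: "finite (carrier G)" and nontrivial: "1 < card (carrier G)"
  obtains K T where "subgroup K G" "subgroup T G" "card (carrier G) = 2 * card K" "card T = 2"
    and "subgroup_generated G K \<times>\<times> subgroup_generated G T \<cong> G"
proof -
  obtain t where t: "t \<in> carrier G" "t \<noteq> \<one>" using ex_non_one[OF nontrivial] by blast
  obtain K where K: "subgroup K G" "t \<notin> K" and cover: "carrier G = K \<union> (\<lambda>k. t \<otimes> k) ` K"
    using boolean_subgroup_complement[OF fin t] by blast
  have KG: "K \<subseteq> carrier G" using K(1) subgroup.subset by blast
  have "finite K" using fin KG by (rule rev_finite_subset)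
  then have card: "card (carrier G) = 2 * card K"
    using translate_subgroup_disjoint[OF K(1) t(1) K(2)] by (subst cover) (simp add: card_Un_disjoint)
  have "K <#> {\<one>, t} = carrier G"
  proof -
    have "K <#> {\<one>, t} = (\<lambda>k. k \<otimes> \<one>) ` K \<union> (\<lambda>k. k \<otimes> t) ` K" by (auto simp: set_mult_def)
    also have "(\<lambda>k. k \<otimes> \<one>) ` K = K" using KG by (auto simp: subsetD)
    also have "(\<lambda>k. k \<otimes> t) ` K = (\<lambda>k. t \<otimes> k) ` K"
      using KG t by (intro image_cong) (auto intro: m_comm)
    finally show ?thesis using cover by simp
  qed
  moreover have "group_disjoint_sum G K {\<one>, t}"
    using K(1) boolean_subgroup_pair[OF t(1)] by (simp add: group_disjoint_sum_def is_group)
  moreover have "K \<inter> {\<one>, t} \<subseteq> {\<one>}" using K(2) by auto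
  ultimately have "(\<lambda>(x, y). x \<otimes> y) \<in> iso (subgroup_generated G K \<times>\<times> subgroup_generated G {\<one>, t}) G"
    using group_disjoint_sum.iso_group_mul[OF _ comm_group_axioms] by blast
  then show ?thesis using that[OF K(1) boolean_subgroup_pair[OF t(1)] card] t(2) is_isoI by auto
qed

end

lemma boolean_groups_iso:
  assumes "boolean_group G" "boolean_group H" "finite (carrier G)" "card (carrier G) = card (carrier H)"
  shows "G \<cong> H"
  using assms
proof (induction "card (carrier G)" arbitrary: G H rule: less_induct)
  case less
  interpret G: group G using less.prems(1) by (simp add: boolean_group_def)
  interpret H: group H using less.prems(2) by (simp add: boolean_group_def)
  have finH: "finite (carrier H)" using less.prems(3,4) G.one_closed card_0_eq by fastforce
  show "G \<cong> H"
  proof (cases "card (carrier G) \<le> 2")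
    case True
    then show ?thesis
      using less.prems finH G.card_le_two_imp_cyclic H.card_le_two_imp_cyclic
      by (intro cyclic_groups_iso) (simp_all add: G.is_group H.is_group)
  next
    case False
    obtain K T where K: "subgroup K G" "subgroup T G" "card (carrier G) = 2 * card K" "card T = 2"
      and GK: "subgroup_generated G K \<times>\<times> subgroup_generated G T \<cong> G"
      using boolean_group_split[OF less.prems(1,3)] False by auto
    obtain L U where L: "subgroup L H" "subgroup U H" "card (carrier H) = 2 * card L" "card U = 2"
      and HL: "subgroup_generated H L \<times>\<times> subgroup_generated H U \<cong> H"
      using boolean_group_split[OF less.prems(2) finH] False less.prems(4) by auto
    have sub_iso: "subgroup_generated G A \<cong> subgroup_generated H B"
      if "subgroup A G" "subgroup B H" "card A = card B" "card A < card (carrier G)" for A B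
      using that less.prems(1-3) boolean_group_subgroup_generated[OF less.prems(1) that(1)]
        boolean_group_subgroup_generated[OF less.prems(2) that(2)]
      by (intro less.hyps) (auto simp: subgroup.carrier_subgroup_generated_subgroup intro: rev_finite_subset dest: subgroup.subset)
    have "G \<cong> subgroup_generated G K \<times>\<times> subgroup_generated G T"
      using GK by (simp add: DirProd_group group.iso_sym)
    also have "\<dots> \<cong> subgroup_generated H L \<times>\<times> subgroup_generated H U"
      using K L False less.prems(4) sub_iso[of K L] sub_iso[of T U] by (simp add: group.DirProd_iso_trans)
    also have "\<dots> \<cong> H" by (rule HL)
    finally show ?thesis .
  qed
qed

section \<open>Groups whose enhanced power graph is a windmill\<close>

abbreviation ep_nbhd :: "('a, 'b) monoid_scheme \<Rightarrow> 'a \<Rightarrow> 'a set" where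
  "ep_nbhd G \<equiv> closed_nbhd (carrier G) (common_cyclic G)"

abbreviation ep_dominating :: "('a, 'b) monoid_scheme \<Rightarrow> 'a set" where
  "ep_dominating G \<equiv> dominating_set (carrier G) (common_cyclic G)"

context group
begin

lemma ex_maximal_powers:
  assumes "finite (carrier G)" "S \<subseteq> carrier G" "x \<in> S"
  obtains g where "g \<in> S" "\<And>c. c \<in> S \<Longrightarrow> powers G g \<subseteq> powers G c \<Longrightarrow> powers G c = powers G g"
proof -
  have "finite (powers G ` S)"
    using assms(1,2) powers_subset_carrier by (intro finite_subset[OF _ finite_Pow_iff[THEN iffD2, OF assms(1)]]) auto
  then obtain g where "g \<in> S" "\<And>c. c \<in> S \<Longrightarrow> powers G g \<subseteq> powers G c \<Longrightarrow> powers G g = powers G c"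
    using finite_has_maximal2[of "powers G ` S" "powers G x"] assms(3) by auto
  with that show ?thesis by metis
qed

lemma cyclic_group_if_common_cyclic:
  assumes fin: "finite (carrier G)"
    and all: "\<And>a b. a \<in> carrier G \<Longrightarrow> b \<in> carrier G \<Longrightarrow> common_cyclic G a b"
  shows "cyclic_group G"
proof -
  obtain g where g: "g \<in> carrier G"
    and maximal: "\<And>c. c \<in> carrier G \<Longrightarrow> powers G g \<subseteq> powers G c \<Longrightarrow> powers G c = powers G g"
    using ex_maximal_powers[OF fin order_refl one_closed] by blast
  have "a \<in> powers G g" if a: "a \<in> carrier G" for a
  proof -
    obtain c where c: "c \<in> carrier G" "g \<in> powers G c" "a \<in> powers G c"
      using all[OF g a] by (auto simp: common_cyclic_def)
    then show ?thesis using maximal[OF c(1) powers_mono[OF c(1,2)]] by simp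
  qed
  then show ?thesis using g powers_subset_carrier cyclic_group_iff_powers by blast
qed

lemma powers_subset_ep_nbhd: "g \<in> carrier G \<Longrightarrow> powers G g \<subseteq> ep_nbhd G g"
  using powers_subset_carrier powers_self by (auto simp: closed_nbhd_def common_cyclic_def)

lemma ep_dominating_subset_nbhd: "x \<in> carrier G \<Longrightarrow> ep_dominating G \<subseteq> ep_nbhd G x"
  by (auto simp: dominating_set_def closed_nbhd_def intro: common_cyclic_sym)

lemma ep_dominating_central: "d \<in> ep_dominating G \<Longrightarrow> y \<in> carrier G \<Longrightarrow> d \<otimes> y = y \<otimes> d"
  by (auto simp: dominating_set_def closed_nbhd_def intro: common_cyclic_commute)

lemma powers_ep_dominating:
  assumes c: "c \<in> ep_dominating G"
  shows "powers G c \<subseteq> ep_dominating G"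
proof
  fix z assume z: "z \<in> powers G c"
  have cG: "c \<in> carrier G" using c by (simp add: dominating_set_def)
  have "common_cyclic G z y" if y: "y \<in> carrier G" for y
  proof -
    obtain w where "w \<in> carrier G" "c \<in> powers G w" "y \<in> powers G w"
      using c y by (auto simp: dominating_set_def closed_nbhd_def common_cyclic_def)
    then show ?thesis using powers_mono z by (auto simp: common_cyclic_def)
  qed
  then show "z \<in> ep_dominating G"
    using z powers_subset_carrier[OF cG] by (auto simp: dominating_set_def closed_nbhd_def)
qed

context
  fixes n
  assumes fin: "finite (carrier G)" and windmill: "windmill (carrier G) (common_cyclic G) n"
begin

text \<open>Take g in the blade of x with maximal cyclic subgroup: anything in the blade shares
  a cyclic subgroup with g, whose generator again lies in the blade, and maximality
  makes g a generator of the whole blade.\<close>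
lemma windmill_nbhd_powers:
  assumes x: "x \<in> carrier G - ep_dominating G"
  shows "\<exists>g\<in>carrier G. ep_nbhd G x = powers G g"
proof -
  let ?S = "ep_nbhd G x - ep_dominating G"
  have clique: "clique (common_cyclic G) (ep_nbhd G x)"
    and same: "\<And>y. y \<in> ?S \<Longrightarrow> ep_nbhd G y = ep_nbhd G x"
    using windmill x unfolding windmill_def by blast+
  have "x \<in> ?S" using x common_cyclic_refl by (auto simp: closed_nbhd_def)
  then obtain g where gS: "g \<in> ?S"
    and maximal: "\<And>c. c \<in> ?S \<Longrightarrow> powers G g \<subseteq> powers G c \<Longrightarrow> powers G c = powers G g"
    using ex_maximal_powers[OF fin, of ?S] closed_nbhd_subset[of "carrier G" "common_cyclic G" x] by blast
  have gG: "g \<in> carrier G" using gS by (simp add: closed_nbhd_def)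
  have "ep_nbhd G x \<subseteq> powers G g"
  proof
    fix a assume a: "a \<in> ep_nbhd G x"
    obtain c where c: "c \<in> carrier G" "g \<in> powers G c" "a \<in> powers G c"
      using clique gS a by (auto simp: clique_def common_cyclic_def)
    have "c \<notin> ep_dominating G" using powers_ep_dominating c(2) gS by blast
    moreover have "c \<in> ep_nbhd G g"
      using c powers_self by (auto simp: closed_nbhd_def common_cyclic_def)
    ultimately have "c \<in> ?S" using same[OF gS] by simp
    then show "a \<in> powers G g" using maximal powers_mono[OF c(1,2)] c(3) by blast
  qed
  moreover have "powers G g \<subseteq> ep_nbhd G x" using powers_subset_ep_nbhd[OF gG] same[OF gS] by simp
  ultimately show ?thesis using gG by blast
qed

lemma windmill_dominating_powers: "\<exists>d\<in>carrier G. ep_dominating G = powers G d"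
proof -
  obtain x y where x: "x \<in> carrier G - ep_dominating G" and y: "y \<in> carrier G - ep_dominating G"
    and meet: "ep_nbhd G x \<inter> ep_nbhd G y = ep_dominating G"
    using windmill unfolding windmill_def by blast
  obtain g h where g: "g \<in> carrier G" "ep_nbhd G x = powers G g"
    and h: "h \<in> carrier G" "ep_nbhd G y = powers G h"
    using windmill_nbhd_powers[OF x] windmill_nbhd_powers[OF y] by blast
  have "subgroup (ep_dominating G) G"
    using subgroup_Int[OF powers_subgroup[OF g(1)] powers_subgroup[OF h(1)]] meet g(2) h(2) by simp
  moreover have "ep_dominating G \<subseteq> powers G g" using meet g(2) by blast
  ultimately obtain d where "d \<in> ep_dominating G" "ep_dominating G = powers G d"
    using subgroup_of_powers_is_powers[OF _ g(1)] by blast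
  then show ?thesis by (auto simp: dominating_set_def)
qed

lemma windmill_dominating_subgroup: "subgroup (ep_dominating G) G"
  using windmill_dominating_powers powers_subgroup by metis

lemma windmill_square_dominating:
  assumes x: "x \<in> carrier G"
  shows "x \<otimes> x \<in> ep_dominating G"
proof (cases "x \<in> ep_dominating G")
  case True
  then show ?thesis using windmill_dominating_subgroup by (simp add: subgroup.m_closed)
next
  case False
  then obtain g where g: "g \<in> carrier G" "ep_nbhd G x = powers G g"
    using windmill_nbhd_powers x by blast
  have "x \<in> carrier G - ep_dominating G" using x False by blast
  then have "card (ep_nbhd G x) = 2 * n" "card (ep_dominating G) = n"
    using windmill unfolding windmill_def by blast+
  moreover have "x \<in> ep_nbhd G x" using x common_cyclic_refl by (simp add: closed_nbhd_def)
  ultimately show ?thesis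
    using square_mem_index_two_subgroup[OF powers_subgroup[OF g(1)] _ windmill_dominating_subgroup]
      ep_dominating_subset_nbhd[OF x] g fin powers_subset_carrier rev_finite_subset
    by metis
qed

lemma windmill_card_dominating: "card (ep_dominating G) = n"
  using windmill unfolding windmill_def by blast

lemma windmill_odd_dominating:
  assumes "odd n"
  shows "subgroup (ep_dominating G) G" "finite (ep_dominating G)" "odd (card (ep_dominating G))"
  using windmill_dominating_subgroup rev_finite_subset[OF fin dominating_set_subset]
    windmill_card_dominating assms by auto

lemma windmill_comm_group: "odd n \<Longrightarrow> comm_group G"
  using comm_group_if_squares_in_central_subgroup[OF windmill_dominating_subgroup ep_dominating_central
      windmill_square_dominating odd_card_subgroup_square_eq_one[OF windmill_odd_dominating]] .

lemma windmill_iso_boolean_times_odd: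
  assumes odd_n: "odd n" and B: "boolean_group B" "finite (carrier B)"
    and card: "card (carrier G) = card (carrier B) * n"
  shows "G \<cong> B \<times>\<times> integer_mod_group n"
proof -
  let ?D = "ep_dominating G" and ?P = "{x \<in> carrier G. x \<otimes> x = \<one>}"
  interpret comm_group G by (rule windmill_comm_group[OF odd_n])
  note D = windmill_odd_dominating[OF odd_n]
  have iso: "(\<lambda>(x, y). x \<otimes> y) \<in> iso (subgroup_generated G ?D \<times>\<times> subgroup_generated G ?P) G"
    using odd_subgroup_complement_iso[OF D windmill_square_dominating] .
  have carr: "carrier (subgroup_generated G ?D) = ?D" "carrier (subgroup_generated G ?P) = ?P"
    using D(1) subgroup_square_eq_one by (simp_all add: subgroup.carrier_subgroup_generated_subgroup)
  have "card ?D * card ?P = card (carrier G)"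
    using iso carr unfolding iso_def by (auto simp: card_cartesian_product dest: bij_betw_same_card)
  then have card_P: "card ?P = card (carrier B)"
    using card windmill_card_dominating odd_pos[OF odd_n] by simp
  obtain d where d: "d \<in> carrier G" "?D = powers G d" using windmill_dominating_powers by blast
  have "integer_mod_group n \<cong> subgroup_generated G ?D"
    using cyclic_group_iso_integer_mod_group[of "subgroup_generated G ?D"] cyclic_subgroup_generated_powers[OF d(1)]
      d(2) carr windmill_card_dominating D(2) by simp
  then have DZ: "subgroup_generated G ?D \<cong> integer_mod_group n" by (simp add: group.iso_sym)
  have PB: "subgroup_generated G ?P \<cong> B"
    using B card_P carr rev_finite_subset[OF fin, of ?P]
    by (intro boolean_groups_iso) (auto simp: boolean_group_def)
  have "G \<cong> subgroup_generated G ?D \<times>\<times> subgroup_generated G ?P"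
    using iso by (simp add: is_isoI group.iso_sym DirProd_group)
  also have "\<dots> \<cong> integer_mod_group n \<times>\<times> B" using DZ PB by (simp add: group.DirProd_iso_trans)
  also have "\<dots> \<cong> B \<times>\<times> integer_mod_group n" by (rule DirProd_commute_iso)
  finally show ?thesis .
qed

end

end

lemma iso_if_complete_ep_graphs:
  assumes G: "group G" "finite (carrier G)" and H: "group H" "finite (carrier H)"
    and bij: "bij_betw f (carrier G) (carrier H)"
    and rel: "\<And>x y. x \<in> carrier G \<Longrightarrow> y \<in> carrier G \<Longrightarrow> common_cyclic G x y \<longleftrightarrow> common_cyclic H (f x) (f y)"
    and complete: "\<And>a b. a \<in> carrier H \<Longrightarrow> b \<in> carrier H \<Longrightarrow> common_cyclic H a b"
  shows "G \<cong> H"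
proof (rule cyclic_groups_iso)
  show "cyclic_group G"
    using rel complete bij_betwE[OF bij] by (intro group.cyclic_group_if_common_cyclic[OF G]) auto
  show "cyclic_group H" using complete by (rule group.cyclic_group_if_common_cyclic[OF H])
  show "card (carrier G) = card (carrier H)" using bij by (rule bij_betw_same_card)
qed (use G H in auto)

section \<open>The groups B x Z_n with B Boolean and n odd\<close>

lemma int_pow_DirProd:
  assumes A: "group A" and B: "group B" and x: "x \<in> carrier (A \<times>\<times> B)"
  shows "x [^]\<^bsub>A \<times>\<times> B\<^esub> (k::int) = (fst x [^]\<^bsub>A\<^esub> k, snd x [^]\<^bsub>B\<^esub> k)"
proof -
  have AB: "group (A \<times>\<times> B)" using A B by (rule DirProd_group)
  have "fst \<in> hom (A \<times>\<times> B) A" "snd \<in> hom (A \<times>\<times> B) B"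
    by (auto intro!: homI simp: mult_DirProd')
  then show ?thesis
    using hom_int_pow[OF _ x AB A] hom_int_pow[OF _ x AB B] by (simp add: prod_eq_iff)
qed

lemma (in group) int_pow_of_square_one:
  assumes x: "x \<in> carrier G" "x \<otimes> x = \<one>"
  shows "x [^] (k::int) = (if even k then \<one> else x)"
proof -
  have "x [^] (2::int) = \<one>" using int_pow_mult[OF x(1), of 1 1] x by simp
  moreover have "x [^] k = (x [^] (2::int)) [^] (k div 2) \<otimes> x [^] (k mod 2)"
    using x(1) by (simp add: int_pow_pow flip: int_pow_mult)
  ultimately show ?thesis using x(1) by (auto simp: even_iff_mod_2_eq_zero odd_iff_mod_2_eq_one)
qed

lemma ex_not_in_pair:
  assumes "2 < card A"
  shows "\<exists>g\<in>A. g \<notin> {a, b}"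
proof (rule ccontr)
  assume "\<not> ?thesis"
  then have "card A \<le> card {a, b}" by (intro card_mono) auto
  also have "\<dots> \<le> 2" by (simp add: card_insert_if)
  finally show False using assms by simp
qed

lemma card_carrier_integer_mod_group: "card (carrier (integer_mod_group n)) = n"
  by (cases "n = 0") (simp_all add: carrier_integer_mod_group infinite_UNIV_int)

lemma mod_mem_carrier_integer_mod_group: "k mod int n \<in> carrier (integer_mod_group n)"
  by (cases "n = 0") (auto simp: carrier_integer_mod_group)

context
  fixes B :: "('a, 'b) monoid_scheme" and n :: nat
  assumes boolean: "boolean_group B" and odd_n: "odd n"
begin

interpretation B: comm_group B by (rule boolean_group_comm[OF boolean])

lemma group_boolean_times_odd: "group (B \<times>\<times> integer_mod_group n)"
  by (simp add: DirProd_group B.is_group)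

lemma finite_boolean_times_odd:
  "finite (carrier B) \<Longrightarrow> finite (carrier (B \<times>\<times> integer_mod_group n))"
  using odd_n by (cases "n = 0") (auto simp: carrier_integer_mod_group)

lemma card_boolean_times_odd:
  "card (carrier (B \<times>\<times> integer_mod_group n)) = card (carrier B) * n"
  by (simp add: card_cartesian_product card_carrier_integer_mod_group)

lemma powers_boolean_times_odd:
  assumes u: "u \<in> carrier B"
  shows "powers (B \<times>\<times> integer_mod_group n) (u, 1 mod int n) = {\<one>\<^bsub>B\<^esub>, u} \<times> carrier (integer_mod_group n)"
proof -
  have n0: "0 < n" using odd_n by (cases n) auto
  have Zn: "carrier (integer_mod_group n) = {0..<int n}" using n0 by (simp add: carrier_integer_mod_group)
  have w: "(u, 1 mod int n) \<in> carrier (B \<times>\<times> integer_mod_group n)"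
    using u by (simp add: mod_mem_carrier_integer_mod_group)
  have pow: "(u, 1 mod int n) [^]\<^bsub>B \<times>\<times> integer_mod_group n\<^esub> a
      = (if even a then \<one>\<^bsub>B\<^esub> else u, a mod int n)" for a :: int
    using int_pow_DirProd[OF B.is_group group_integer_mod_group w]
      B.int_pow_of_square_one[OF u] boolean u
    by (simp add: boolean_group_def int_pow_integer_mod_group mod_mult_right_eq[of a 1, simplified])
  show ?thesis
  proof (intro equalityI subsetI)
    fix x assume "x \<in> powers (B \<times>\<times> integer_mod_group n) (u, 1 mod int n)"
    then show "x \<in> {\<one>\<^bsub>B\<^esub>, u} \<times> carrier (integer_mod_group n)"
      using n0 by (auto simp: powers_def pow Zn)
  next
    fix x assume x: "x \<in> {\<one>\<^bsub>B\<^esub>, u} \<times> carrier (integer_mod_group n)"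
    obtain h k where hk: "x = (h, k)" "h = \<one>\<^bsub>B\<^esub> \<or> h = u" "0 \<le> k" "k < int n" using x Zn by auto
    \<comment> \<open>n is odd, so one of k and k + n has the parity that selects h.\<close>
    define a where "a = (if (h = \<one>\<^bsub>B\<^esub>) = even k then k else k + int n)"
    have "(u, 1 mod int n) [^]\<^bsub>B \<times>\<times> integer_mod_group n\<^esub> a = x"
      using hk odd_n by (auto simp: pow a_def)
    then show "x \<in> powers (B \<times>\<times> integer_mod_group n) (u, 1 mod int n)"
      unfolding powers_def by (metis rangeI)
  qed
qed

lemma fst_mem_powers_boolean_times_odd:
  assumes w: "w \<in> carrier (B \<times>\<times> integer_mod_group n)"
    and x: "x \<in> powers (B \<times>\<times> integer_mod_group n) w"
  shows "fst x = \<one>\<^bsub>B\<^esub> \<or> fst x = fst w"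
proof -
  obtain a :: int where "x = w [^]\<^bsub>B \<times>\<times> integer_mod_group n\<^esub> a" using x by (auto simp: powers_def)
  then have "fst x = fst w [^]\<^bsub>B\<^esub> a"
    using int_pow_DirProd[OF B.is_group group_integer_mod_group w] by simp
  moreover have "fst w \<in> carrier B" using w by auto
  ultimately show ?thesis
    using B.int_pow_of_square_one boolean by (simp add: boolean_group_def)
qed

lemma common_cyclic_boolean_times_odd:
  assumes x: "x \<in> carrier (B \<times>\<times> integer_mod_group n)" and y: "y \<in> carrier (B \<times>\<times> integer_mod_group n)"
  shows "common_cyclic (B \<times>\<times> integer_mod_group n) x y
    \<longleftrightarrow> fst x = \<one>\<^bsub>B\<^esub> \<or> fst y = \<one>\<^bsub>B\<^esub> \<or> fst x = fst y"
proof
  assume "common_cyclic (B \<times>\<times> integer_mod_group n) x y"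
  then show "fst x = \<one>\<^bsub>B\<^esub> \<or> fst y = \<one>\<^bsub>B\<^esub> \<or> fst x = fst y"
    using fst_mem_powers_boolean_times_odd unfolding common_cyclic_def by metis
next
  assume fst: "fst x = \<one>\<^bsub>B\<^esub> \<or> fst y = \<one>\<^bsub>B\<^esub> \<or> fst x = fst y"
  define u where "u = (if fst x = \<one>\<^bsub>B\<^esub> then fst y else fst x)"
  have u: "u \<in> carrier B" using x y by (auto simp: u_def)
  have "x \<in> powers (B \<times>\<times> integer_mod_group n) (u, 1 mod int n)"
    and "y \<in> powers (B \<times>\<times> integer_mod_group n) (u, 1 mod int n)"
    unfolding powers_boolean_times_odd[OF u] using fst x y by (auto simp: u_def mem_Times_iff)
  moreover have "(u, 1 mod int n) \<in> carrier (B \<times>\<times> integer_mod_group n)"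
    using u by (simp add: mod_mem_carrier_integer_mod_group)
  ultimately show "common_cyclic (B \<times>\<times> integer_mod_group n) x y"
    unfolding common_cyclic_def by blast
qed

lemma ep_nbhd_boolean_times_odd:
  assumes x: "x \<in> carrier (B \<times>\<times> integer_mod_group n)" and x1: "fst x \<noteq> \<one>\<^bsub>B\<^esub>"
  shows "ep_nbhd (B \<times>\<times> integer_mod_group n) x = {\<one>\<^bsub>B\<^esub>, fst x} \<times> carrier (integer_mod_group n)"
  using x x1 common_cyclic_boolean_times_odd[OF x] by (auto simp: closed_nbhd_def)

lemma ep_dominating_boolean_times_odd:
  assumes three: "2 < card (carrier B)"
  shows "ep_dominating (B \<times>\<times> integer_mod_group n) = {\<one>\<^bsub>B\<^esub>} \<times> carrier (integer_mod_group n)"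
proof (intro equalityI subsetI)
  fix x assume x: "x \<in> ep_dominating (B \<times>\<times> integer_mod_group n)"
  then have xH: "x \<in> carrier (B \<times>\<times> integer_mod_group n)" by (simp add: dominating_set_def)
  have "fst x = \<one>\<^bsub>B\<^esub>"
  proof (rule ccontr)
    assume x1: "fst x \<noteq> \<one>\<^bsub>B\<^esub>"
    obtain g where g: "g \<in> carrier B" "g \<notin> {\<one>\<^bsub>B\<^esub>, fst x}"
      using ex_not_in_pair[OF three] by blast
    have "(g, 0) \<in> carrier (B \<times>\<times> integer_mod_group n)" using g by simp
    moreover have "(g, 0) \<notin> ep_nbhd (B \<times>\<times> integer_mod_group n) x"
      unfolding ep_nbhd_boolean_times_odd[OF xH x1] using g by simp
    ultimately show False using x by (simp add: dominating_set_def)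
  qed
  then show "x \<in> {\<one>\<^bsub>B\<^esub>} \<times> carrier (integer_mod_group n)" using xH by (auto simp: mem_Times_iff)
next
  fix x assume "x \<in> {\<one>\<^bsub>B\<^esub>} \<times> carrier (integer_mod_group n)"
  then show "x \<in> ep_dominating (B \<times>\<times> integer_mod_group n)"
    using common_cyclic_boolean_times_odd by (auto simp: dominating_set_def closed_nbhd_def)
qed

lemma blade_boolean_times_odd:
  assumes three: "2 < card (carrier B)"
    and x: "x \<in> carrier (B \<times>\<times> integer_mod_group n)" "fst x \<noteq> \<one>\<^bsub>B\<^esub>"
  defines "H \<equiv> B \<times>\<times> integer_mod_group n"
  shows "card (ep_nbhd H x) = 2 * n \<and> clique (common_cyclic H) (ep_nbhd H x)
    \<and> (\<forall>y\<in>ep_nbhd H x - ep_dominating H. ep_nbhd H y = ep_nbhd H x)"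
proof (intro conjI ballI)
  have N: "ep_nbhd H x = {\<one>\<^bsub>B\<^esub>, fst x} \<times> carrier (integer_mod_group n)"
    unfolding H_def by (rule ep_nbhd_boolean_times_odd[OF x])
  show "card (ep_nbhd H x) = 2 * n"
    unfolding N using x(2) by (simp add: card_cartesian_product card_carrier_integer_mod_group)
  show "clique (common_cyclic H) (ep_nbhd H x)"
    unfolding clique_def
  proof (intro ballI)
    fix a b assume ab: "a \<in> ep_nbhd H x" "b \<in> ep_nbhd H x"
    then have "a \<in> carrier H" "b \<in> carrier H"
      using closed_nbhd_subset[of "carrier H" "common_cyclic H" x] by blast+
    moreover have "fst a = \<one>\<^bsub>B\<^esub> \<or> fst b = \<one>\<^bsub>B\<^esub> \<or> fst a = fst b"
      using ab unfolding N by auto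
    ultimately show "common_cyclic H a b"
      unfolding H_def using common_cyclic_boolean_times_odd by simp
  qed
  fix y assume y: "y \<in> ep_nbhd H x - ep_dominating H"
  then have yH: "y \<in> carrier H" using closed_nbhd_subset[of "carrier H" "common_cyclic H" x] by blast
  have "fst y \<in> {\<one>\<^bsub>B\<^esub>, fst x}" using y unfolding N by auto
  moreover have "fst y \<noteq> \<one>\<^bsub>B\<^esub>"
    using y yH unfolding H_def ep_dominating_boolean_times_odd[OF three] by (auto simp: mem_Times_iff)
  ultimately have "fst y = fst x" by blast
  moreover have "ep_nbhd H y = {\<one>\<^bsub>B\<^esub>, fst y} \<times> carrier (integer_mod_group n)"
    using yH \<open>fst y \<noteq> \<one>\<^bsub>B\<^esub>\<close> unfolding H_def by (rule ep_nbhd_boolean_times_odd)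
  ultimately show "ep_nbhd H y = ep_nbhd H x" using N by simp
qed

lemma windmill_boolean_times_odd:
  assumes three: "2 < card (carrier B)"
  shows "windmill (carrier (B \<times>\<times> integer_mod_group n)) (common_cyclic (B \<times>\<times> integer_mod_group n)) n"
proof -
  let ?H = "B \<times>\<times> integer_mod_group n"
  have D: "ep_dominating ?H = {\<one>\<^bsub>B\<^esub>} \<times> carrier (integer_mod_group n)"
    by (rule ep_dominating_boolean_times_odd[OF three])
  have out: "x \<in> carrier ?H - ep_dominating ?H \<longleftrightarrow> x \<in> carrier ?H \<and> fst x \<noteq> \<one>\<^bsub>B\<^esub>" for x
    unfolding D by (auto simp: mem_Times_iff)
  obtain f where f: "f \<in> carrier B" "f \<noteq> \<one>\<^bsub>B\<^esub>" using ex_not_in_pair[OF three] by blast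
  obtain g where g: "g \<in> carrier B" "g \<notin> {\<one>\<^bsub>B\<^esub>, f}" using ex_not_in_pair[OF three] by blast
  have fH: "(f, 0) \<in> carrier ?H" "fst (f, 0::int) \<noteq> \<one>\<^bsub>B\<^esub>"
    and gH: "(g, 0) \<in> carrier ?H" "fst (g, 0::int) \<noteq> \<one>\<^bsub>B\<^esub>" using f g by simp_all
  have "ep_nbhd ?H (f, 0) \<inter> ep_nbhd ?H (g, 0) = ep_dominating ?H"
    unfolding D ep_nbhd_boolean_times_odd[OF fH] ep_nbhd_boolean_times_odd[OF gH] using f g by auto
  moreover have "(f, 0) \<in> carrier ?H - ep_dominating ?H" "(g, 0) \<in> carrier ?H - ep_dominating ?H"
    using fH gH unfolding out by blast+
  ultimately have meet: "\<exists>x\<in>carrier ?H - ep_dominating ?H. \<exists>y\<in>carrier ?H - ep_dominating ?H.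
      ep_nbhd ?H x \<inter> ep_nbhd ?H y = ep_dominating ?H"
    by blast
  have "card (ep_dominating ?H) = n"
    unfolding D by (simp add: card_cartesian_product card_carrier_integer_mod_group)
  then show ?thesis unfolding windmill_def using blade_boolean_times_odd[OF three] out meet by blast
qed

lemma common_cyclic_boolean_card_le_two_times_odd:
  assumes finB: "finite (carrier B)" and two: "card (carrier B) \<le> 2"
    and a: "a \<in> carrier (B \<times>\<times> integer_mod_group n)" and b: "b \<in> carrier (B \<times>\<times> integer_mod_group n)"
  shows "common_cyclic (B \<times>\<times> integer_mod_group n) a b"
proof -
  have "fst a = \<one>\<^bsub>B\<^esub> \<or> fst b = \<one>\<^bsub>B\<^esub> \<or> fst a = fst b"
  proof (rule ccontr)
    assume "\<not> ?thesis"
    then have "card {\<one>\<^bsub>B\<^esub>, fst a, fst b} = 3" by (auto simp: card_insert_if)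
    moreover have "card {\<one>\<^bsub>B\<^esub>, fst a, fst b} \<le> card (carrier B)"
      using a b finB by (intro card_mono) auto
    ultimately show False using two by simp
  qed
  then show ?thesis using common_cyclic_boolean_times_odd[OF a b] by simp
qed

lemma iso_if_ep_graph_iso_boolean_times_odd:
  assumes G: "group G" "finite (carrier G)" and finB: "finite (carrier B)"
    and ep_iso: "ep_graph_iso G (B \<times>\<times> integer_mod_group n)"
  shows "G \<cong> B \<times>\<times> integer_mod_group n"
proof -
  obtain f where bij: "bij_betw f (carrier G) (carrier (B \<times>\<times> integer_mod_group n))"
    and rel: "\<And>x y. x \<in> carrier G \<Longrightarrow> y \<in> carrier G
      \<Longrightarrow> common_cyclic G x y \<longleftrightarrow> common_cyclic (B \<times>\<times> integer_mod_group n) (f x) (f y)"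
    using ep_graph_iso_common_cyclic[OF G(1) group_boolean_times_odd ep_iso] by blast
  show ?thesis
  proof (cases "card (carrier B) \<le> 2")
    case True
    then show ?thesis
      using iso_if_complete_ep_graphs[OF G group_boolean_times_odd finite_boolean_times_odd[OF finB] bij rel]
        common_cyclic_boolean_card_le_two_times_odd[OF finB True] by blast
  next
    case False
    then have "windmill (carrier G) (common_cyclic G) n"
      using windmill_transfer[where E = "common_cyclic G", OF bij rel] windmill_boolean_times_odd by simp
    moreover have "card (carrier G) = card (carrier B) * n"
      using bij_betw_same_card[OF bij] card_boolean_times_odd by simp
    ultimately show ?thesis
      using group.windmill_iso_boolean_times_odd[OF G(1,2) _ odd_n boolean finB] by blast
  qed
qed

end

lemma boolean_group_power_Z2: "boolean_group (product_group I (\<lambda>_. integer_mod_group 2))"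
proof -
  have "(x i + x i) mod 2 = 0" for x :: "nat \<Rightarrow> int" and i by presburger
  then show ?thesis by (auto simp: boolean_group_def fun_eq_iff)
qed

lemma finite_power_Z2: "finite (carrier (product_group {..<m::nat} (\<lambda>_. integer_mod_group 2)))"
  unfolding carrier_product_group by (rule finite_PiE) (simp_all add: carrier_integer_mod_group)

theorem theorem6:
  fixes G :: "('a, 'b) monoid_scheme" and m n :: nat
  assumes "group G" and "finite (carrier G)" and "0 < m" and "0 < n" and "odd n"
  shows "ep_graph_iso G (Z2m_Zn m n) \<longleftrightarrow> G \<cong> Z2m_Zn m n"
  unfolding Z2m_Zn_def
proof
  assume "ep_graph_iso G (product_group {..<m} (\<lambda>_. integer_mod_group 2) \<times>\<times> integer_mod_group n)"
  then show "G \<cong> product_group {..<m} (\<lambda>_. integer_mod_group 2) \<times>\<times> integer_mod_group n"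
    using iso_if_ep_graph_iso_boolean_times_odd[OF boolean_group_power_Z2 \<open>odd n\<close>]
      \<open>group G\<close> \<open>finite (carrier G)\<close> finite_power_Z2 by blast
next
  assume "G \<cong> product_group {..<m} (\<lambda>_. integer_mod_group 2) \<times>\<times> integer_mod_group n"
  then show "ep_graph_iso G (product_group {..<m} (\<lambda>_. integer_mod_group 2) \<times>\<times> integer_mod_group n)"
    using iso_imp_ep_graph_iso[OF \<open>group G\<close> group_boolean_times_odd[OF boolean_group_power_Z2 \<open>odd n\<close>]]
    by (auto simp: is_iso_def)
qed

end
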